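(* Let $G$ be a countable graph. Suppose that some connected component $H$ of $G$ has infinitely many pairwise non-isomorphic connected graphs equimorphic to $H$. Then $G$ has infinitely many pairwise non-isomorphic siblings, and if $G$ has at least two connected components, then infinitely many pairwise non-isomorphic siblings of $G$ are disconnected.
   Context: Graphs are undirected and loopless. $G$ embeds into $G'$ if $G$ is isomorphic to an induced subgraph of $G'$; $G,G'$ are equimorphic if each embeds into the other; a sibling of $G$ is a graph equimorphic to $G$. *)

theory Defs
  imports Main "HOL-Library.Countable_Set"
begin

type_synonym 'a ugraph = "'a set \<times> ('a \<times> 'a) set"

abbreviation verts :: "'a ugraph \<Rightarrow> 'a set" where "verts G \<equiv> fst G"
abbreviation edges :: "'a ugraph \<Rightarrow> ('a \<times> 'a) set" where "edges G \<equiv> snd G"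

definition graph :: "'a ugraph \<Rightarrow> bool" where
  "graph G \<longleftrightarrow> edges G \<subseteq> verts G \<times> verts G \<and> sym (edges G)
     \<and> (\<forall>x. (x, x) \<notin> edges G)"

definition embeds :: "'a ugraph \<Rightarrow> 'b ugraph \<Rightarrow> bool" where
  "embeds G G' \<longleftrightarrow> (\<exists>f. inj_on f (verts G) \<and> f ` verts G \<subseteq> verts G' \<and>
     (\<forall>x\<in>verts G. \<forall>y\<in>verts G. (x, y) \<in> edges G \<longleftrightarrow> (f x, f y) \<in> edges G'))"

definition equimorphic :: "'a ugraph \<Rightarrow> 'b ugraph \<Rightarrow> bool" where
  "equimorphic G G' \<longleftrightarrow> embeds G G' \<and> embeds G' G"

definition isomorphic :: "'a ugraph \<Rightarrow> 'b ugraph \<Rightarrow> bool" where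
  "isomorphic G G' \<longleftrightarrow> (\<exists>f. bij_betw f (verts G) (verts G') \<and>
     (\<forall>x\<in>verts G. \<forall>y\<in>verts G. (x, y) \<in> edges G \<longleftrightarrow> (f x, f y) \<in> edges G'))"

definition connected_graph :: "'a ugraph \<Rightarrow> bool" where
  "connected_graph G \<longleftrightarrow> verts G \<noteq> {} \<and>
     (\<forall>x\<in>verts G. \<forall>y\<in>verts G. (x, y) \<in> (edges G)\<^sup>*)"

definition induced_subgraph :: "'a ugraph \<Rightarrow> 'a set \<Rightarrow> 'a ugraph" where
  "induced_subgraph G C = (C, edges G \<inter> (C \<times> C))"

definition component_sets :: "'a ugraph \<Rightarrow> 'a set set" where
  "component_sets G = {{y \<in> verts G. (x, y) \<in> (edges G)\<^sup>*} | x. x \<in> verts G}"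

definition components :: "'a ugraph \<Rightarrow> 'a ugraph set" where
  "components G = induced_subgraph G ` component_sets G"

end

theory Submission
  imports Defs
begin

(* Replacing some components of a graph by connected graphs equimorphic to them produces an
   equimorphic graph with the same number of components, since embeddings can be assembled
   component by component.
   Let T be the given infinite family of pairwise non-isomorphic connected graphs equimorphic
   to the component H. If infinitely many t in T are not components of G, let G_t be G with H
   replaced by t: t is a component of G_t but not of G_t' for t' other than t, so these
   siblings are pairwise non-isomorphic. Otherwise infinitely many t in T are components of G
   not isomorphic to H; let G_t be G with every component isomorphic to t replaced by H: now t
   is not a component of G_t, while every other such t' is. *)

section \<open>Isomorphisms and embeddings\<close>

lemma isomorphic_refl: "isomorphic X X"
  unfolding isomorphic_def by (rule exI[of _ id]) simp

lemma isomorphic_sym: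
  assumes "isomorphic X Y" shows "isomorphic Y X"
proof -
  obtain f where f: "bij_betw f (verts X) (verts Y)"
    and e: "\<forall>x\<in>verts X. \<forall>y\<in>verts X. (x, y) \<in> edges X \<longleftrightarrow> (f x, f y) \<in> edges Y"
    using assms unfolding isomorphic_def by blast
  let ?g = "inv_into (verts X) f"
  have g: "bij_betw ?g (verts Y) (verts X)" using f by (rule bij_betw_inv_into)
  have "(x, y) \<in> edges Y \<longleftrightarrow> (?g x, ?g y) \<in> edges X" if "x \<in> verts Y" "y \<in> verts Y" for x y
  proof -
    have "?g x \<in> verts X" "?g y \<in> verts X" using g that bij_betwE by blast+
    moreover have "f (?g x) = x" "f (?g y) = y" using f that by (meson bij_betw_inv_into_right)+
    ultimately show ?thesis using e by metis
  qed
  then show ?thesis using g unfolding isomorphic_def by blast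
qed

lemma isomorphic_trans:
  assumes "isomorphic X Y" "isomorphic Y Z" shows "isomorphic X Z"
proof -
  obtain f where f: "bij_betw f (verts X) (verts Y)"
    and e: "\<forall>x\<in>verts X. \<forall>y\<in>verts X. (x, y) \<in> edges X \<longleftrightarrow> (f x, f y) \<in> edges Y"
    using assms(1) unfolding isomorphic_def by blast
  obtain g where g: "bij_betw g (verts Y) (verts Z)"
    and e': "\<forall>x\<in>verts Y. \<forall>y\<in>verts Y. (x, y) \<in> edges Y \<longleftrightarrow> (g x, g y) \<in> edges Z"
    using assms(2) unfolding isomorphic_def by blast
  have "bij_betw (g \<circ> f) (verts X) (verts Z)" using f g by (rule bij_betw_trans)
  moreover have "f x \<in> verts Y" if "x \<in> verts X" for x using f that bij_betwE by blast
  ultimately show ?thesis using e e' unfolding isomorphic_def by (intro exI[of _ "g \<circ> f"]) simp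
qed

lemma isomorphic_imp_embeds: "isomorphic X Y \<Longrightarrow> embeds X Y"
  unfolding isomorphic_def embeds_def bij_betw_def by blast

lemma embeds_trans:
  assumes "embeds X Y" "embeds Y Z" shows "embeds X Z"
proof -
  obtain f where f: "inj_on f (verts X)" "f ` verts X \<subseteq> verts Y"
    and e: "\<forall>x\<in>verts X. \<forall>y\<in>verts X. (x, y) \<in> edges X \<longleftrightarrow> (f x, f y) \<in> edges Y"
    using assms(1) unfolding embeds_def by blast
  obtain g where g: "inj_on g (verts Y)" "g ` verts Y \<subseteq> verts Z"
    and e': "\<forall>x\<in>verts Y. \<forall>y\<in>verts Y. (x, y) \<in> edges Y \<longleftrightarrow> (g x, g y) \<in> edges Z"
    using assms(2) unfolding embeds_def by blast
  have "inj_on (g \<circ> f) (verts X)" using comp_inj_on[OF f(1) inj_on_subset[OF g(1) f(2)]] .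
  moreover have "(g \<circ> f) ` verts X \<subseteq> verts Z" using f g by fastforce
  ultimately show ?thesis using e e' f(2) unfolding embeds_def
    by (intro exI[of _ "g \<circ> f"]) (simp add: image_subset_iff)
qed

lemma equimorphic_sym: "equimorphic X Y \<Longrightarrow> equimorphic Y X"
  unfolding equimorphic_def by blast

lemma equimorphic_trans: "equimorphic X Y \<Longrightarrow> equimorphic Y Z \<Longrightarrow> equimorphic X Z"
  unfolding equimorphic_def by (meson embeds_trans)

lemma isomorphic_imp_equimorphic: "isomorphic X Y \<Longrightarrow> equimorphic X Y"
  unfolding equimorphic_def by (meson isomorphic_imp_embeds isomorphic_sym)

lemma isomorphic_onto_image:
  assumes "inj_on f A" "\<forall>x\<in>A. \<forall>y\<in>A. (x, y) \<in> E \<longleftrightarrow> (f x, f y) \<in> E'"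
  shows "isomorphic (A, E \<inter> A \<times> A) (f ` A, E' \<inter> f ` A \<times> f ` A)"
  unfolding isomorphic_def using assms by (intro exI[of _ f]) (auto simp: bij_betw_def)

lemma graph_induced_subgraph: "graph X \<Longrightarrow> graph (induced_subgraph X A)"
  unfolding graph_def induced_subgraph_def sym_def by auto

lemma graph_isomorphic:
  assumes "graph X" "isomorphic X Y" "edges Y \<subseteq> verts Y \<times> verts Y"
  shows "graph Y"
proof -
  obtain f where f: "bij_betw f (verts X) (verts Y)"
    and e: "\<forall>x\<in>verts X. \<forall>y\<in>verts X. (x, y) \<in> edges X \<longleftrightarrow> (f x, f y) \<in> edges Y"
    using assms(2) unfolding isomorphic_def by blast
  have pre: "\<exists>x\<in>verts X. \<exists>y\<in>verts X. u = f x \<and> v = f y \<and> (x, y) \<in> edges X"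
    if "(u, v) \<in> edges Y" for u v
  proof -
    have "u \<in> f ` verts X" "v \<in> f ` verts X"
      using that assms(3) f unfolding bij_betw_def by auto
    then show ?thesis using that e by blast
  qed
  have "(v, u) \<in> edges Y" if uv: "(u, v) \<in> edges Y" for u v
  proof -
    obtain x y where "x \<in> verts X" "y \<in> verts X" "u = f x" "v = f y" "(x, y) \<in> edges X"
      using pre[OF uv] by blast
    moreover have "(y, x) \<in> edges X" using calculation(5) assms(1) unfolding graph_def sym_def by blast
    ultimately show ?thesis using e by blast
  qed
  moreover have "(u, u) \<notin> edges Y" for u
  proof
    assume "(u, u) \<in> edges Y"
    then obtain x y where "x \<in> verts X" "y \<in> verts X" "f x = f y" "(x, y) \<in> edges X"
      using pre by metis
    then show False using f assms(1) unfolding bij_betw_def inj_on_def graph_def by metis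
  qed
  ultimately show ?thesis using assms(3) unfolding graph_def sym_def by blast
qed

lemma isomorphic_map_ugraph:
  assumes "inj_on f (verts X)" "graph X"
  shows "isomorphic X (f ` verts X, map_prod f f ` edges X)"
proof -
  have "(x, y) \<in> edges X" if xy: "x \<in> verts X" "y \<in> verts X"
    and e: "(f x, f y) \<in> map_prod f f ` edges X" for x y
  proof -
    obtain a b where ab: "(a, b) \<in> edges X" "f a = f x" "f b = f y" using e by auto
    then have "a \<in> verts X" "b \<in> verts X" using assms(2) unfolding graph_def by auto
    then show ?thesis using ab xy assms(1) unfolding inj_on_def by metis
  qed
  then show ?thesis using assms(1) unfolding isomorphic_def bij_betw_def
    by (intro exI[of _ f]) force
qed

lemma isomorphic_nat_ugraph:
  assumes "graph X" "countable (verts X)"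
  obtains Y :: "nat ugraph" where "graph Y" "isomorphic X Y"
proof
  let ?f = "to_nat_on (verts X)"
  have "inj_on ?f (verts X)" using assms(2) by (rule inj_on_to_nat_on)
  then show iso: "isomorphic X (?f ` verts X, map_prod ?f ?f ` edges X)"
    using assms(1) by (rule isomorphic_map_ugraph)
  have "map_prod ?f ?f ` edges X \<subseteq> ?f ` verts X \<times> ?f ` verts X"
    using assms(1) unfolding graph_def by auto
  then show "graph (?f ` verts X, map_prod ?f ?f ` edges X)"
    using graph_isomorphic[OF assms(1) iso] by simp
qed

section \<open>Connected components\<close>

definition edge_closed :: "'a ugraph \<Rightarrow> 'a set \<Rightarrow> bool" where
  "edge_closed X A \<longleftrightarrow> A \<subseteq> verts X \<and> (\<forall>x\<in>A. \<forall>y. (x, y) \<in> edges X \<longrightarrow> y \<in> A)"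

definition component_of :: "'a ugraph \<Rightarrow> 'a \<Rightarrow> 'a set" where
  "component_of X x = {y \<in> verts X. (x, y) \<in> (edges X)\<^sup>*}"

lemma component_sets_eq_image: "component_sets X = component_of X ` verts X"
  unfolding component_sets_def component_of_def by blast

lemma edge_closed_rtrancl:
  assumes "edge_closed X A" "x \<in> A" "(x, y) \<in> (edges X)\<^sup>*" shows "y \<in> A"
  using assms(3,2) assms(1) unfolding edge_closed_def by (induction rule: rtrancl_induct) blast+

lemma edge_closed_connected_eq_verts:
  assumes "connected_graph X" "edge_closed X A" "A \<noteq> {}" shows "A = verts X"
proof -
  obtain x where "x \<in> A" using assms(3) by blast
  then show ?thesis
    using edge_closed_rtrancl[OF assms(2)] assms(1,2)
    unfolding connected_graph_def edge_closed_def by blast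
qed

lemma rtrancl_edges_in_verts:
  assumes "graph X" "(x, y) \<in> (edges X)\<^sup>*" "x \<in> verts X" shows "y \<in> verts X"
  using assms(2,3) assms(1) unfolding graph_def by (induction rule: rtrancl_induct) blast+

lemma isomorphic_connected:
  assumes "isomorphic X Y" "graph X" "connected_graph X" shows "connected_graph Y"
proof -
  obtain f where f: "bij_betw f (verts X) (verts Y)"
    and e: "\<forall>x\<in>verts X. \<forall>y\<in>verts X. (x, y) \<in> edges X \<longleftrightarrow> (f x, f y) \<in> edges Y"
    using assms(1) unfolding isomorphic_def by blast
  have path: "(f x, f y) \<in> (edges Y)\<^sup>*" if "(x, y) \<in> (edges X)\<^sup>*" "x \<in> verts X" for x y
    using that
  proof (induction rule: rtrancl_induct)
    case (step y z)
    then have "y \<in> verts X" "z \<in> verts X" using assms(2) unfolding graph_def by auto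
    then have "(f y, f z) \<in> edges Y" using e step(2) by blast
    then show ?case using step by (meson rtrancl.rtrancl_into_rtrancl)
  qed simp
  have "verts Y = f ` verts X" using f unfolding bij_betw_def by simp
  then show ?thesis using path assms(3) unfolding connected_graph_def by auto
qed

lemma component_of_self: "x \<in> verts X \<Longrightarrow> x \<in> component_of X x"
  unfolding component_of_def by simp

lemma edge_closed_component_of:
  assumes "graph X" shows "edge_closed X (component_of X x)"
  using assms unfolding edge_closed_def component_of_def graph_def
  by (auto intro: rtrancl.rtrancl_into_rtrancl)

lemma connected_component_of:
  assumes "graph X" "x \<in> verts X"
  shows "connected_graph (induced_subgraph X (component_of X x))"
proof -
  let ?C = "component_of X x"
  let ?E = "edges X \<inter> ?C \<times> ?C"
  have from_x: "(x, y) \<in> ?E\<^sup>*" if "y \<in> ?C" for y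
  proof -
    have "(x, y) \<in> (edges X)\<^sup>*" using that unfolding component_of_def by blast
    then show ?thesis
    proof (induction rule: rtrancl_induct)
      case (step y z)
      have "(x, z) \<in> (edges X)\<^sup>*" using step(1,2) by (rule rtrancl.rtrancl_into_rtrancl)
      then have "y \<in> ?C" "z \<in> ?C"
        using step(1) rtrancl_edges_in_verts[OF assms(1) _ assms(2)]
        unfolding component_of_def by blast+
      then have "(y, z) \<in> ?E" using step(2) by blast
      with step(3) show ?case by (rule rtrancl.rtrancl_into_rtrancl)
    qed simp
  qed
  have "sym ?E" using assms(1) unfolding graph_def sym_def by blast
  then have "sym (?E\<^sup>*)" by (rule sym_rtrancl)
  then have "(y, z) \<in> ?E\<^sup>*" if "y \<in> ?C" "z \<in> ?C" for y z
    using from_x[OF that(1)] from_x[OF that(2)] rtrancl_trans unfolding sym_def by metis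
  moreover have "?C \<noteq> {}" using component_of_self[OF assms(2)] by blast
  ultimately show ?thesis unfolding connected_graph_def induced_subgraph_def by simp
qed

lemma edge_closed_connected_eq_component_of:
  assumes "edge_closed X A" "connected_graph (induced_subgraph X A)" "x \<in> A"
  shows "A = component_of X x"
proof
  show "A \<subseteq> component_of X x"
  proof
    fix y assume "y \<in> A"
    then have "(x, y) \<in> (edges X \<inter> A \<times> A)\<^sup>*"
      using assms(2,3) unfolding connected_graph_def induced_subgraph_def by simp
    then have "(x, y) \<in> (edges X)\<^sup>*" using rtrancl_mono[of "edges X \<inter> A \<times> A"] by blast
    then show "y \<in> component_of X x"
      using \<open>y \<in> A\<close> assms(1) unfolding component_of_def edge_closed_def by blast
  qed
  show "component_of X x \<subseteq> A"
    using edge_closed_rtrancl[OF assms(1,3)] unfolding component_of_def by blast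
qed

lemma component_sets_iff:
  assumes "graph X"
  shows "A \<in> component_sets X \<longleftrightarrow> edge_closed X A \<and> connected_graph (induced_subgraph X A)"
proof
  assume "A \<in> component_sets X"
  then obtain x where "x \<in> verts X" and A: "A = component_of X x"
    unfolding component_sets_eq_image by blast
  then show "edge_closed X A \<and> connected_graph (induced_subgraph X A)"
    unfolding A using edge_closed_component_of[OF assms] connected_component_of[OF assms] by blast
next
  assume A: "edge_closed X A \<and> connected_graph (induced_subgraph X A)"
  then have "A \<noteq> {}" unfolding connected_graph_def induced_subgraph_def by simp
  then obtain x where x: "x \<in> A" by blast
  then have "x \<in> verts X" using A unfolding edge_closed_def by blast
  moreover have "A = component_of X x" using edge_closed_connected_eq_component_of[of X A x] A x by simp
  ultimately show "A \<in> component_sets X" unfolding component_sets_eq_image by blast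
qed

lemma component_of_in_component_sets: "x \<in> verts X \<Longrightarrow> component_of X x \<in> component_sets X"
  unfolding component_sets_eq_image by blast

lemma component_sets_nonempty: "C \<in> component_sets X \<Longrightarrow> C \<noteq> {}"
  unfolding component_sets_eq_image by (auto dest: component_of_self)

lemma component_sets_subset: "C \<in> component_sets X \<Longrightarrow> C \<subseteq> verts X"
  unfolding component_sets_eq_image component_of_def by blast

lemma component_sets_eq_component_of:
  assumes "graph X" "C \<in> component_sets X" "x \<in> C" shows "C = component_of X x"
  using assms(2) edge_closed_connected_eq_component_of[OF _ _ assms(3)]
  unfolding component_sets_iff[OF assms(1)] by blast

lemma component_sets_disjoint:
  assumes "graph X" "C \<in> component_sets X" "D \<in> component_sets X" "x \<in> C" "x \<in> D"
  shows "C = D"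
  using component_sets_eq_component_of[OF assms(1,2,4)] component_sets_eq_component_of[OF assms(1,3,5)]
  by simp

lemma component_sets_edge_iff:
  assumes "graph X" "C \<in> component_sets X" "(x, y) \<in> edges X" shows "x \<in> C \<longleftrightarrow> y \<in> C"
proof -
  have "edge_closed X C" using assms(2) unfolding component_sets_iff[OF assms(1)] by blast
  moreover have "(y, x) \<in> edges X" using assms(1,3) unfolding graph_def sym_def by blast
  ultimately show ?thesis using assms(3) unfolding edge_closed_def by blast
qed

lemma connected_graph_component_sets_eq:
  assumes "graph X" "connected_graph X" "C \<in> component_sets X" "D \<in> component_sets X"
  shows "C = D"
proof -
  have "A = verts X" if "A \<in> component_sets X" for A
    using edge_closed_connected_eq_verts[OF assms(2)] that component_sets_nonempty[OF that]
    unfolding component_sets_iff[OF assms(1)] by blast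
  then show ?thesis using assms(3,4) by blast
qed

lemma isomorphic_component:
  assumes "isomorphic X Y" "graph X" "graph Y" "C \<in> component_sets X"
  obtains D where "D \<in> component_sets Y" "isomorphic (induced_subgraph X C) (induced_subgraph Y D)"
proof -
  obtain f where f: "bij_betw f (verts X) (verts Y)"
    and e: "\<forall>x\<in>verts X. \<forall>y\<in>verts X. (x, y) \<in> edges X \<longleftrightarrow> (f x, f y) \<in> edges Y"
    using assms(1) unfolding isomorphic_def by blast
  have C: "C \<subseteq> verts X" "edge_closed X C" "connected_graph (induced_subgraph X C)"
    using component_sets_subset[OF assms(4)] assms(4) unfolding component_sets_iff[OF assms(2)]
    by blast+
  have "inj_on f C" using f C(1) unfolding bij_betw_def by (rule inj_on_subset[OF conjunct1])
  moreover have "\<forall>x\<in>C. \<forall>y\<in>C. (x, y) \<in> edges X \<longleftrightarrow> (f x, f y) \<in> edges Y" using e C(1) by blast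
  ultimately have iso: "isomorphic (induced_subgraph X C) (induced_subgraph Y (f ` C))"
    unfolding induced_subgraph_def by (rule isomorphic_onto_image)
  have "edge_closed Y (f ` C)"
    unfolding edge_closed_def
  proof (intro conjI ballI allI impI)
    show "f ` C \<subseteq> verts Y" using f C(1) unfolding bij_betw_def by blast
    fix u v assume u: "u \<in> f ` C" and uv: "(u, v) \<in> edges Y"
    then obtain x where x: "x \<in> C" "u = f x" by blast
    have "v \<in> f ` verts X" using uv assms(3) f unfolding graph_def bij_betw_def by auto
    then obtain y where y: "y \<in> verts X" "v = f y" by blast
    then have "(x, y) \<in> edges X" using e x uv C(1) by blast
    then show "v \<in> f ` C" using C(2) x y unfolding edge_closed_def by blast
  qed
  moreover have "connected_graph (induced_subgraph Y (f ` C))"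
    using isomorphic_connected[OF iso graph_induced_subgraph[OF assms(2)] C(3)] .
  ultimately have "f ` C \<in> component_sets Y" unfolding component_sets_iff[OF assms(3)] by blast
  then show thesis using iso by (rule that)
qed

definition has_component :: "'a ugraph \<Rightarrow> 'b ugraph \<Rightarrow> bool" where
  "has_component X K \<longleftrightarrow> (\<exists>C\<in>component_sets X. isomorphic K (induced_subgraph X C))"

lemma has_component_isomorphic:
  assumes "has_component X K" "isomorphic X Y" "graph X" "graph Y"
  shows "has_component Y K"
proof -
  obtain C where "C \<in> component_sets X" and KC: "isomorphic K (induced_subgraph X C)"
    using assms(1) unfolding has_component_def by blast
  then obtain D where "D \<in> component_sets Y" "isomorphic (induced_subgraph X C) (induced_subgraph Y D)"
    using isomorphic_component[OF assms(2-4)] by blast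
  then show ?thesis using isomorphic_trans[OF KC] unfolding has_component_def by blast
qed

lemma embeds_by_componentwise_map:
  assumes "graph X" "graph Y" "inj_on g (component_sets X)"
    and g: "\<And>C. C \<in> component_sets X \<Longrightarrow> g C \<in> component_sets Y"
    and f_into: "\<And>x. x \<in> verts X \<Longrightarrow> f x \<in> g (component_of X x)"
    and f_embeds: "\<And>C. C \<in> component_sets X \<Longrightarrow>
      inj_on f C \<and> (\<forall>x\<in>C. \<forall>y\<in>C. (x, y) \<in> edges X \<longleftrightarrow> (f x, f y) \<in> edges Y)"
  shows "embeds X Y"
proof -
  define c where "c = component_of X"
  have c: "c x \<in> component_sets X" "x \<in> c x" "g (c x) \<in> component_sets Y" "f x \<in> g (c x)"
    if "x \<in> verts X" for x
    using that g f_into unfolding c_def by (simp_all add: component_of_in_component_sets component_of_self)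
  have same_component: "y \<in> c x \<longleftrightarrow> c x = c y" if "x \<in> verts X" "y \<in> verts X" for x y
    using component_sets_eq_component_of[OF assms(1) c(1)[OF that(1)]] c(2)[OF that(2)]
    unfolding c_def by metis
  have image_eq: "f y \<in> g (c x) \<longleftrightarrow> c x = c y" if "x \<in> verts X" "y \<in> verts X" for x y
    using component_sets_disjoint[OF assms(2) c(3)[OF that(1)] c(3)[OF that(2)] _ c(4)[OF that(2)]]
      inj_on_eq_iff[OF assms(3) c(1)[OF that(1)] c(1)[OF that(2)]] c(4)[OF that(2)] by metis
  have "inj_on f (verts X)"
  proof (rule inj_onI)
    fix x y assume x: "x \<in> verts X" and y: "y \<in> verts X" and fxy: "f x = f y"
    then have "y \<in> c x" using image_eq same_component c(4)[OF x] by metis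
    then show "x = y" using f_embeds[OF c(1)[OF x]] c(2)[OF x] fxy unfolding inj_on_def by blast
  qed
  moreover have "f ` verts X \<subseteq> verts Y" using c(3,4) component_sets_subset by blast
  moreover have "(x, y) \<in> edges X \<longleftrightarrow> (f x, f y) \<in> edges Y"
    if x: "x \<in> verts X" and y: "y \<in> verts X" for x y
  proof (cases "y \<in> c x")
    case True
    then show ?thesis using f_embeds[OF c(1)[OF x]] c(2)[OF x] by blast
  next
    case False
    then have "f y \<notin> g (c x)" using image_eq same_component x y by blast
    then have "(f x, f y) \<notin> edges Y"
      using component_sets_edge_iff[OF assms(2) c(3)[OF x]] c(4)[OF x] by blast
    moreover have "(x, y) \<notin> edges X"
      using False component_sets_edge_iff[OF assms(1) c(1)[OF x]] c(2)[OF x] by blast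
    ultimately show ?thesis by blast
  qed
  ultimately show ?thesis unfolding embeds_def by blast
qed

lemma embeds_componentwise:
  assumes "graph X" "graph Y" "inj_on g (component_sets X)"
    and "\<And>C. C \<in> component_sets X \<Longrightarrow>
      g C \<in> component_sets Y \<and> embeds (induced_subgraph X C) (induced_subgraph Y (g C))"
  shows "embeds X Y"
proof -
  have "\<forall>C\<in>component_sets X. \<exists>h. inj_on h C \<and> h ` C \<subseteq> g C \<and>
      (\<forall>x\<in>C. \<forall>y\<in>C. (x, y) \<in> edges X \<longleftrightarrow> (h x, h y) \<in> edges Y)"
  proof
    fix C assume C: "C \<in> component_sets X"
    obtain h where "inj_on h C" "h ` C \<subseteq> g C"
      "\<forall>x\<in>C. \<forall>y\<in>C. (x, y) \<in> edges X \<inter> C \<times> C \<longleftrightarrow> (h x, h y) \<in> edges Y \<inter> g C \<times> g C"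
      using assms(4)[OF C] unfolding embeds_def induced_subgraph_def by auto
    then show "\<exists>h. inj_on h C \<and> h ` C \<subseteq> g C \<and>
      (\<forall>x\<in>C. \<forall>y\<in>C. (x, y) \<in> edges X \<longleftrightarrow> (h x, h y) \<in> edges Y)"
      by (intro exI[of _ h]) blast
  qed
  from bchoice[OF this] obtain h where h: "\<forall>C\<in>component_sets X. inj_on (h C) C \<and> h C ` C \<subseteq> g C \<and>
      (\<forall>x\<in>C. \<forall>y\<in>C. (x, y) \<in> edges X \<longleftrightarrow> (h C x, h C y) \<in> edges Y)"
    by blast
  define f where "f x = h (component_of X x) x" for x
  have f_on: "f x = h C x" if "C \<in> component_sets X" "x \<in> C" for C x
    using component_sets_eq_component_of[OF assms(1) that] unfolding f_def by simp
  show ?thesis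
  proof (rule embeds_by_componentwise_map[OF assms(1-3)])
    fix C assume C: "C \<in> component_sets X"
    show "g C \<in> component_sets Y" using assms(4)[OF C] by blast
    have "inj_on f C" using h C inj_on_cong[of C f "h C"] f_on[OF C] by blast
    then show "inj_on f C \<and> (\<forall>x\<in>C. \<forall>y\<in>C. (x, y) \<in> edges X \<longleftrightarrow> (f x, f y) \<in> edges Y)"
      using h C f_on[OF C] by simp
  next
    fix x assume "x \<in> verts X"
    then have "component_of X x \<in> component_sets X" "x \<in> component_of X x"
      by (simp_all add: component_of_in_component_sets component_of_self)
    then show "f x \<in> g (component_of X x)" using h unfolding f_def by blast
  qed
qed

lemma equimorphic_componentwise:
  assumes "graph X" "graph Y" "bij_betw g (component_sets X) (component_sets Y)"
    and "\<And>C. C \<in> component_sets X \<Longrightarrow> equimorphic (induced_subgraph X C) (induced_subgraph Y (g C))"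
  shows "equimorphic X Y"
proof -
  let ?g' = "inv_into (component_sets X) g"
  have g': "bij_betw ?g' (component_sets Y) (component_sets X)"
    using assms(3) by (rule bij_betw_inv_into)
  have "embeds X Y"
  proof (rule embeds_componentwise[OF assms(1,2)])
    show "inj_on g (component_sets X)" using assms(3) by (rule bij_betw_imp_inj_on)
    fix C assume "C \<in> component_sets X"
    then show "g C \<in> component_sets Y \<and> embeds (induced_subgraph X C) (induced_subgraph Y (g C))"
      using assms(3,4) bij_betwE unfolding equimorphic_def by blast
  qed
  moreover have "embeds Y X"
  proof (rule embeds_componentwise[OF assms(2,1)])
    show "inj_on ?g' (component_sets Y)" using g' by (rule bij_betw_imp_inj_on)
    fix D assume D: "D \<in> component_sets Y"
    then have "?g' D \<in> component_sets X" using g' bij_betwE by blast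
    moreover have "g (?g' D) = D" using assms(3) D by (rule bij_betw_inv_into_right)
    ultimately show "?g' D \<in> component_sets X \<and> embeds (induced_subgraph Y D) (induced_subgraph X (?g' D))"
      using assms(4)[of "?g' D"] unfolding equimorphic_def by simp
  qed
  ultimately show ?thesis unfolding equimorphic_def by blast
qed

section \<open>Replacing components\<close>

(* Vertices outside the components in CC keep their names under Inl; each C in CC is replaced
   by a copy of F C whose vertices are tagged with C, so copies for different C are disjoint. *)
definition replace_components ::
    "'a ugraph \<Rightarrow> 'a set set \<Rightarrow> ('a set \<Rightarrow> 'b ugraph) \<Rightarrow> ('a + 'b \<times> 'a set) ugraph" where
  "replace_components G CC F =
    (Inl ` (verts G - \<Union>CC) \<union> (\<Union>C\<in>CC. (\<lambda>b. Inr (b, C)) ` verts (F C)),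
     {(Inl x, Inl y) | x y. (x, y) \<in> edges G \<and> x \<notin> \<Union>CC \<and> y \<notin> \<Union>CC} \<union>
     {(Inr (a, C), Inr (b, C)) | a b C. C \<in> CC \<and> (a, b) \<in> edges (F C)})"

locale component_replacement =
  fixes G :: "'a ugraph" and CC :: "'a set set" and F :: "'a set \<Rightarrow> 'b ugraph"
  assumes graph_G: "graph G"
    and CC_components: "CC \<subseteq> component_sets G"
    and graph_F: "\<And>C. C \<in> CC \<Longrightarrow> graph (F C)"
    and connected_F: "\<And>C. C \<in> CC \<Longrightarrow> connected_graph (F C)"
    and equimorphic_F: "\<And>C. C \<in> CC \<Longrightarrow> equimorphic (F C) (induced_subgraph G C)"
begin

abbreviation R :: "('a + 'b \<times> 'a set) ugraph" where
  "R \<equiv> replace_components G CC F"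

lemma Inl_in_verts_R [simp]: "Inl x \<in> verts R \<longleftrightarrow> x \<in> verts G \<and> x \<notin> \<Union>CC"
  unfolding replace_components_def by auto

lemma Inr_in_verts_R [simp]: "Inr (b, C) \<in> verts R \<longleftrightarrow> C \<in> CC \<and> b \<in> verts (F C)"
  unfolding replace_components_def by auto

lemma Inl_Inl_in_edges_R [simp]:
  "(Inl x, Inl y) \<in> edges R \<longleftrightarrow> (x, y) \<in> edges G \<and> x \<notin> \<Union>CC \<and> y \<notin> \<Union>CC"
  unfolding replace_components_def by auto

lemma Inr_Inr_in_edges_R [simp]:
  "(Inr (a, C), Inr (b, D)) \<in> edges R \<longleftrightarrow> C = D \<and> C \<in> CC \<and> (a, b) \<in> edges (F C)"
  unfolding replace_components_def by auto

lemma Inl_Inr_notin_edges_R [simp]: "(Inl x, Inr p) \<notin> edges R" "(Inr p, Inl x) \<notin> edges R"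
  unfolding replace_components_def by auto

lemma graph_R: "graph R"
proof -
  have "(u, v) \<in> edges R \<Longrightarrow> u \<in> verts R \<and> v \<in> verts R \<and> (v, u) \<in> edges R \<and> u \<noteq> v" for u v
  proof (cases u; cases v)
    fix x y assume "(u, v) \<in> edges R" "u = Inl x" "v = Inl y"
    then show ?thesis using graph_G unfolding graph_def sym_def by auto
  next
    fix p q assume uv: "(u, v) \<in> edges R" "u = Inr p" "v = Inr q"
    obtain a C b D where "p = (a, C)" "q = (b, D)" by fastforce
    then show ?thesis using uv graph_F[of C] unfolding graph_def sym_def by auto
  qed auto
  then have "edges R \<subseteq> verts R \<times> verts R" "sym (edges R)" "(u, u) \<notin> edges R" for u
    unfolding sym_def by auto
  then show ?thesis unfolding graph_def by blast
qed

lemma in_Union_CC_iff: "C \<in> component_sets G \<Longrightarrow> x \<in> C \<Longrightarrow> x \<in> \<Union>CC \<longleftrightarrow> C \<in> CC"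
  using component_sets_disjoint[OF graph_G] CC_components by blast

definition new_component :: "'a set \<Rightarrow> ('a + 'b \<times> 'a set) set" where
  "new_component C = (if C \<in> CC then (\<lambda>b. Inr (b, C)) ` verts (F C) else Inl ` C)"

lemma new_component_replaced:
  assumes "C \<in> CC"
  shows "new_component C \<in> component_sets R"
    and "isomorphic (F C) (induced_subgraph R (new_component C))"
proof -
  let ?N = "(\<lambda>b. Inr (b, C)) ` verts (F C)"
  have "inj_on (\<lambda>b. Inr (b, C)) (verts (F C))" by (rule inj_onI) simp
  moreover have "\<forall>a\<in>verts (F C). \<forall>b\<in>verts (F C). (a, b) \<in> edges (F C) \<longleftrightarrow> (Inr (a, C), Inr (b, C)) \<in> edges R"
    using assms by simp
  ultimately have "isomorphic (verts (F C), edges (F C) \<inter> verts (F C) \<times> verts (F C)) (?N, edges R \<inter> ?N \<times> ?N)"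
    by (rule isomorphic_onto_image)
  moreover have "edges (F C) \<inter> verts (F C) \<times> verts (F C) = edges (F C)"
    using graph_F[OF assms] unfolding graph_def by blast
  ultimately have iso: "isomorphic (F C) (induced_subgraph R ?N)"
    unfolding induced_subgraph_def by simp
  have "edge_closed R ?N"
    unfolding edge_closed_def
  proof (intro conjI ballI allI impI)
    show "?N \<subseteq> verts R" using assms by auto
    fix u v assume "u \<in> ?N" "(u, v) \<in> edges R"
    then show "v \<in> ?N" using graph_F[OF assms] unfolding graph_def by (cases v) auto
  qed
  moreover have "connected_graph (induced_subgraph R ?N)"
    using isomorphic_connected[OF iso graph_F[OF assms] connected_F[OF assms]] .
  ultimately have "?N \<in> component_sets R" unfolding component_sets_iff[OF graph_R] by blast
  then show "new_component C \<in> component_sets R" using assms unfolding new_component_def by simp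
  show "isomorphic (F C) (induced_subgraph R (new_component C))"
    using iso assms unfolding new_component_def by simp
qed

lemma new_component_kept:
  assumes "C \<in> component_sets G" "C \<notin> CC"
  shows "new_component C \<in> component_sets R"
    and "isomorphic (induced_subgraph G C) (induced_subgraph R (new_component C))"
proof -
  have C: "C \<subseteq> verts G" "C \<inter> \<Union>CC = {}"
    using component_sets_subset[OF assms(1)] in_Union_CC_iff[OF assms(1)] assms(2) by blast+
  have "inj_on Inl C" by (rule inj_onI) simp
  moreover have "\<forall>x\<in>C. \<forall>y\<in>C. (x, y) \<in> edges G \<longleftrightarrow> (Inl x, Inl y) \<in> edges R"
    using C(2) by auto
  ultimately have iso: "isomorphic (induced_subgraph G C) (induced_subgraph R (Inl ` C))"
    unfolding induced_subgraph_def by (rule isomorphic_onto_image)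
  have "edge_closed R (Inl ` C)"
    unfolding edge_closed_def
  proof (intro conjI ballI allI impI)
    show "Inl ` C \<subseteq> verts R" using C by force
    fix u v assume u: "u \<in> Inl ` C" and uv: "(u, v) \<in> edges R"
    then obtain x where x: "x \<in> C" "u = Inl x" by blast
    show "v \<in> Inl ` C"
    proof (cases v)
      case (Inl y)
      then have "(x, y) \<in> edges G" using uv x by simp
      then show ?thesis using component_sets_edge_iff[OF graph_G assms(1)] x Inl by blast
    qed (use uv x in simp)
  qed
  moreover have "connected_graph (induced_subgraph R (Inl ` C))"
    using iso graph_induced_subgraph[OF graph_G] assms(1)
    unfolding component_sets_iff[OF graph_G] by (blast intro: isomorphic_connected)
  ultimately have "Inl ` C \<in> component_sets R" unfolding component_sets_iff[OF graph_R] by blast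
  then show "new_component C \<in> component_sets R" using assms(2) unfolding new_component_def by simp
  show "isomorphic (induced_subgraph G C) (induced_subgraph R (new_component C))"
    using iso assms(2) unfolding new_component_def by simp
qed

lemma new_component_in_component_sets:
  "C \<in> component_sets G \<Longrightarrow> new_component C \<in> component_sets R"
  using new_component_replaced(1) new_component_kept(1) by blast

lemma verts_R_covered:
  assumes "u \<in> verts R" obtains C where "C \<in> component_sets G" "u \<in> new_component C"
proof (cases u)
  case (Inl x)
  then have x: "x \<in> verts G" "x \<notin> \<Union>CC" using assms by simp_all
  let ?C = "component_of G x"
  have "?C \<in> component_sets G" "x \<in> ?C"
    using x(1) by (simp_all add: component_of_in_component_sets component_of_self)
  moreover have "?C \<notin> CC" using in_Union_CC_iff calculation x(2) by blast
  ultimately show thesis using that Inl unfolding new_component_def by simp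
next
  case (Inr p)
  then obtain b C where "u = Inr (b, C)" "C \<in> CC" "b \<in> verts (F C)"
    using assms by (cases p) auto
  then show thesis using that CC_components unfolding new_component_def by auto
qed

lemma inj_on_new_component: "inj_on new_component (component_sets G)"
proof (rule inj_onI)
  fix C D assume C: "C \<in> component_sets G" and D: "D \<in> component_sets G"
    and eq: "new_component C = new_component D"
  have ne: "new_component E \<noteq> {}" if "E \<in> component_sets G" for E
    using new_component_in_component_sets[OF that] component_sets_nonempty by blast
  show "C = D"
  proof (cases "C \<in> CC"; cases "D \<in> CC")
    assume CD: "C \<in> CC" "D \<in> CC"
    obtain u where u: "u \<in> new_component C" using ne[OF C] by blast
    then obtain b where "u = Inr (b, C)" using CD(1) unfolding new_component_def by auto
    moreover have "u \<in> new_component D" using u eq by simp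
    ultimately show "C = D" using CD(2) unfolding new_component_def by auto
  next
    assume "C \<notin> CC" "D \<notin> CC"
    then show "C = D" using eq unfolding new_component_def by (simp add: inj_image_eq_iff)
  qed (use eq ne[OF C] in \<open>auto simp: new_component_def\<close>)
qed

lemma image_new_component: "new_component ` component_sets G = component_sets R"
proof
  show "new_component ` component_sets G \<subseteq> component_sets R"
    using new_component_in_component_sets by blast
  show "component_sets R \<subseteq> new_component ` component_sets G"
  proof
    fix A assume A: "A \<in> component_sets R"
    obtain u where u: "u \<in> A" using component_sets_nonempty[OF A] by blast
    then obtain C where C: "C \<in> component_sets G" "u \<in> new_component C"
      using component_sets_subset[OF A] verts_R_covered by blast
    then have "A = new_component C"
      using component_sets_disjoint[OF graph_R A new_component_in_component_sets[OF C(1)] u]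
      by blast
    then show "A \<in> new_component ` component_sets G" using C(1) by blast
  qed
qed

lemma bij_betw_new_component: "bij_betw new_component (component_sets G) (component_sets R)"
  using inj_on_new_component image_new_component by (rule bij_betw_imageI)

lemma equimorphic_R: "equimorphic R G"
proof -
  have "equimorphic (induced_subgraph G C) (induced_subgraph R (new_component C))"
    if "C \<in> component_sets G" for C
  proof (cases "C \<in> CC")
    case True
    then show ?thesis
      using equimorphic_F new_component_replaced(2) equimorphic_sym equimorphic_trans
        isomorphic_imp_equimorphic by metis
  next
    case False
    then show ?thesis using new_component_kept(2)[OF that] isomorphic_imp_equimorphic by blast
  qed
  then have "equimorphic G R"
    using equimorphic_componentwise[OF graph_G graph_R bij_betw_new_component] by blast
  then show ?thesis by (rule equimorphic_sym)
qed

lemma has_component_R_iff: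
  "has_component R K \<longleftrightarrow>
    (\<exists>D\<in>component_sets G - CC. isomorphic K (induced_subgraph G D)) \<or> (\<exists>C\<in>CC. isomorphic K (F C))"
  (is "_ \<longleftrightarrow> ?rhs")
proof -
  have "has_component R K \<longleftrightarrow>
      (\<exists>C\<in>component_sets G. isomorphic K (induced_subgraph R (new_component C)))"
    unfolding has_component_def image_new_component[symmetric] by blast
  also have "\<dots> \<longleftrightarrow> ?rhs"
  proof -
    have "isomorphic K (induced_subgraph R (new_component C)) \<longleftrightarrow> isomorphic K (F C)"
      if "C \<in> CC" for C
      using new_component_replaced(2)[OF that] isomorphic_sym isomorphic_trans by metis
    moreover have "isomorphic K (induced_subgraph R (new_component D)) \<longleftrightarrow>
        isomorphic K (induced_subgraph G D)" if "D \<in> component_sets G" "D \<notin> CC" for D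
      using new_component_kept(2)[OF that] isomorphic_sym isomorphic_trans by metis
    ultimately show ?thesis using CC_components by blast
  qed
  finally show ?thesis .
qed

lemma connected_R_imp_component_sets_eq:
  assumes "connected_graph R" "C \<in> component_sets G" "D \<in> component_sets G"
  shows "C = D"
proof -
  have "new_component C = new_component D"
    using connected_graph_component_sets_eq[OF graph_R assms(1)]
      new_component_in_component_sets assms(2,3) by blast
  then show ?thesis using inj_on_new_component assms(2,3) unfolding inj_on_def by blast
qed

lemma sibling_if_isomorphic_R:
  assumes "isomorphic R Y" "graph Y"
  shows "equimorphic Y G"
    and "(\<exists>C1\<in>components G. \<exists>C2\<in>components G. C1 \<noteq> C2) \<Longrightarrow> \<not> connected_graph Y"
proof -
  show "equimorphic Y G"
    using isomorphic_imp_equimorphic[OF isomorphic_sym[OF assms(1)]] equimorphic_R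
    by (rule equimorphic_trans)
  assume "\<exists>C1\<in>components G. \<exists>C2\<in>components G. C1 \<noteq> C2"
  then obtain C1 C2 where "C1 \<in> component_sets G" "C2 \<in> component_sets G"
    "induced_subgraph G C1 \<noteq> induced_subgraph G C2"
    unfolding components_def by blast
  then show "\<not> connected_graph Y"
    using isomorphic_connected[OF isomorphic_sym[OF assms(1)] assms(2)]
      connected_R_imp_component_sets_eq by blast
qed

lemma countable_verts_R:
  assumes "countable (verts G)" "\<And>C. C \<in> CC \<Longrightarrow> countable (verts (F C))"
  shows "countable (verts R)"
proof -
  have "countable CC"
    using countable_subset[OF CC_components] assms(1) unfolding component_sets_eq_image by blast
  then show ?thesis using assms unfolding replace_components_def by auto
qed

end

section \<open>Infinitely many siblings\<close>

definition pairwise_nonisomorphic :: "'a ugraph set \<Rightarrow> bool" where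
  "pairwise_nonisomorphic S \<longleftrightarrow> (\<forall>K1\<in>S. \<forall>K2\<in>S. K1 \<noteq> K2 \<longrightarrow> \<not> isomorphic K1 K2)"

lemma pairwise_nonisomorphicD:
  "pairwise_nonisomorphic S \<Longrightarrow> K1 \<in> S \<Longrightarrow> K2 \<in> S \<Longrightarrow> isomorphic K1 K2 \<Longrightarrow> K1 = K2"
  unfolding pairwise_nonisomorphic_def by blast

lemma pairwise_nonisomorphic_subset:
  "pairwise_nonisomorphic S \<Longrightarrow> T \<subseteq> S \<Longrightarrow> pairwise_nonisomorphic T"
  unfolding pairwise_nonisomorphic_def by blast

lemma pairwise_nonisomorphic_finite_isomorphic:
  assumes "pairwise_nonisomorphic S" shows "finite {K\<in>S. isomorphic K H}"
proof (cases "{K\<in>S. isomorphic K H} = {}")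
  case False
  then obtain K0 where K0: "K0 \<in> S" "isomorphic K0 H" by blast
  have "{K\<in>S. isomorphic K H} \<subseteq> {K0}"
    using K0 assms isomorphic_sym isomorphic_trans unfolding pairwise_nonisomorphic_def by blast
  then show ?thesis using finite_subset by blast
qed (simp only: finite.emptyI)

definition infinite_sibling_family :: "'a ugraph \<Rightarrow> 'b ugraph set \<Rightarrow> bool" where
  "infinite_sibling_family G S \<longleftrightarrow> infinite S \<and> pairwise_nonisomorphic S \<and>
    (\<forall>K\<in>S. graph K \<and> equimorphic K G \<and>
      ((\<exists>C1\<in>components G. \<exists>C2\<in>components G. C1 \<noteq> C2) \<longrightarrow> \<not> connected_graph K))"

lemma infinite_sibling_family_of_replacements:
  fixes G :: "'a ugraph" and T :: "'i set"
    and CC :: "'i \<Rightarrow> 'a set set" and F :: "'i \<Rightarrow> 'a set \<Rightarrow> 'b ugraph"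
  defines "replaced t \<equiv> replace_components G (CC t) (F t)"
  assumes "countable (verts G)" "infinite T"
    and replacement: "\<And>t. t \<in> T \<Longrightarrow> component_replacement G (CC t) (F t)"
    and countable_F: "\<And>t C. t \<in> T \<Longrightarrow> C \<in> CC t \<Longrightarrow> countable (verts (F t C))"
    and distinct: "\<And>t t'. t \<in> T \<Longrightarrow> t' \<in> T \<Longrightarrow> isomorphic (replaced t) (replaced t') \<Longrightarrow> t = t'"
  shows "\<exists>S :: nat ugraph set. infinite_sibling_family G S"
proof -
  have "\<forall>t\<in>T. \<exists>Y :: nat ugraph. graph Y \<and> isomorphic (replaced t) Y"
  proof
    fix t assume t: "t \<in> T"
    interpret component_replacement G "CC t" "F t" by (rule replacement[OF t])
    show "\<exists>Y :: nat ugraph. graph Y \<and> isomorphic (replaced t) Y"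
      using isomorphic_nat_ugraph[OF graph_R countable_verts_R[OF assms(2) countable_F[OF t]]]
      unfolding replaced_def by blast
  qed
  from bchoice[OF this] obtain X :: "'i \<Rightarrow> nat ugraph"
    where X: "\<forall>t\<in>T. graph (X t) \<and> isomorphic (replaced t) (X t)" by blast
  have X_iso: "isomorphic (X t) (X t') \<longleftrightarrow> t = t'" if "t \<in> T" "t' \<in> T" for t t'
    using X that distinct isomorphic_sym isomorphic_trans isomorphic_refl by metis
  have "inj_on X T" using X_iso isomorphic_refl unfolding inj_on_def by metis
  then have "infinite (X ` T)" using assms(3) finite_imageD by blast
  moreover have "pairwise_nonisomorphic (X ` T)"
    using X_iso unfolding pairwise_nonisomorphic_def by blast
  moreover have "graph (X t) \<and> equimorphic (X t) G \<and>
      ((\<exists>C1\<in>components G. \<exists>C2\<in>components G. C1 \<noteq> C2) \<longrightarrow> \<not> connected_graph (X t))"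
    if t: "t \<in> T" for t
  proof -
    interpret component_replacement G "CC t" "F t" by (rule replacement[OF t])
    show ?thesis using X t sibling_if_isomorphic_R unfolding replaced_def by blast
  qed
  ultimately show ?thesis unfolding infinite_sibling_family_def by blast
qed

lemma infinite_sibling_family_by_new_components:
  fixes T :: "'b::countable ugraph set"
  assumes "graph G" "countable (verts G)" "C0 \<in> component_sets G"
    and "infinite T" "pairwise_nonisomorphic T"
    and T: "\<And>t. t \<in> T \<Longrightarrow> graph t \<and> connected_graph t \<and>
      equimorphic t (induced_subgraph G C0) \<and> \<not> has_component G t"
  shows "\<exists>S :: nat ugraph set. infinite_sibling_family G S"
proof (rule infinite_sibling_family_of_replacements[where CC = "\<lambda>_. {C0}" and F = "\<lambda>t _. t"])
  show replacement: "component_replacement G {C0} (\<lambda>_. t)" if "t \<in> T" for t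
    using assms(1,3) T[OF that] by unfold_locales auto
  fix t t' assume t: "t \<in> T" and t': "t' \<in> T"
    and iso: "isomorphic (replace_components G {C0} (\<lambda>_. t)) (replace_components G {C0} (\<lambda>_. t'))"
  interpret t: component_replacement G "{C0}" "\<lambda>_. t" by (rule replacement[OF t])
  interpret t': component_replacement G "{C0}" "\<lambda>_. t'" by (rule replacement[OF t'])
  have "has_component t.R t" using t.has_component_R_iff isomorphic_refl by blast
  then have "has_component t'.R t" using has_component_isomorphic[OF _ iso t.graph_R t'.graph_R] by blast
  then have "isomorphic t t'" using t'.has_component_R_iff T[OF t] unfolding has_component_def by blast
  then show "t = t'" by (rule pairwise_nonisomorphicD[OF assms(5) t t'])
qed (use assms(2,4) in simp_all)

lemma infinite_sibling_family_by_removed_components: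
  assumes "graph G" "countable (verts G)" "C0 \<in> component_sets G"
    and "infinite T" "pairwise_nonisomorphic T"
    and T: "\<And>t. t \<in> T \<Longrightarrow> equimorphic t (induced_subgraph G C0) \<and> has_component G t \<and>
      \<not> isomorphic t (induced_subgraph G C0)"
  shows "\<exists>S :: nat ugraph set. infinite_sibling_family G S"
proof (rule infinite_sibling_family_of_replacements
    [where CC = "\<lambda>t. {C \<in> component_sets G. isomorphic t (induced_subgraph G C)}"
      and F = "\<lambda>_ _. induced_subgraph G C0"])
  let ?CC = "\<lambda>t. {C \<in> component_sets G. isomorphic t (induced_subgraph G C)}"
  show replacement: "component_replacement G (?CC t) (\<lambda>_. induced_subgraph G C0)" if "t \<in> T" for t
  proof
    fix C assume "C \<in> ?CC t"
    then show "equimorphic (induced_subgraph G C0) (induced_subgraph G C)"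
      using T[OF that] equimorphic_sym equimorphic_trans isomorphic_imp_equimorphic by blast
  qed (use assms(1,3) graph_induced_subgraph[OF assms(1)] in \<open>auto simp: component_sets_iff[OF assms(1)]\<close>)
  show "countable (verts (induced_subgraph G C0))"
    using countable_subset[OF component_sets_subset[OF assms(3)] assms(2)]
    unfolding induced_subgraph_def by simp
  fix t t' assume t: "t \<in> T" and t': "t' \<in> T"
    and iso: "isomorphic (replace_components G (?CC t) (\<lambda>_. induced_subgraph G C0))
      (replace_components G (?CC t') (\<lambda>_. induced_subgraph G C0))"
  interpret t: component_replacement G "?CC t" "\<lambda>_. induced_subgraph G C0" by (rule replacement[OF t])
  interpret t': component_replacement G "?CC t'" "\<lambda>_. induced_subgraph G C0" by (rule replacement[OF t'])
  show "t = t'"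
  proof (rule ccontr)
    assume "t \<noteq> t'"
    then have "\<not> isomorphic t' t" using pairwise_nonisomorphicD[OF assms(5) t' t] by blast
    obtain D where D: "D \<in> component_sets G" "isomorphic t' (induced_subgraph G D)"
      using T[OF t'] unfolding has_component_def by blast
    have "D \<notin> ?CC t"
      using isomorphic_trans[OF D(2) isomorphic_sym] \<open>\<not> isomorphic t' t\<close> by blast
    then have "has_component t.R t'" unfolding t.has_component_R_iff using D by blast
    then have "has_component t'.R t'" by (rule has_component_isomorphic[OF _ iso t.graph_R t'.graph_R])
    then show False unfolding t'.has_component_R_iff using T[OF t'] by blast
  qed
qed (use assms(2,4) in simp_all)

lemma infinite_sibling_family_of_equimorphic_component:
  fixes T :: "'b::countable ugraph set"
  assumes "graph G" "countable (verts G)" "C0 \<in> component_sets G"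
    and "infinite T" "pairwise_nonisomorphic T"
    and T: "\<And>t. t \<in> T \<Longrightarrow> graph t \<and> connected_graph t \<and> equimorphic t (induced_subgraph G C0)"
  shows "\<exists>S :: nat ugraph set. infinite_sibling_family G S"
proof -
  let ?H = "induced_subgraph G C0"
  let ?new = "{t \<in> T. \<not> has_component G t}"
  let ?old = "{t \<in> T. has_component G t \<and> \<not> isomorphic t ?H}"
  have "infinite ?new \<or> infinite ?old"
  proof (rule ccontr)
    assume "\<not> (infinite ?new \<or> infinite ?old)"
    then have "finite (?new \<union> ?old \<union> {t \<in> T. isomorphic t ?H})"
      using pairwise_nonisomorphic_finite_isomorphic[OF assms(5)] by simp
    moreover have "T \<subseteq> ?new \<union> ?old \<union> {t \<in> T. isomorphic t ?H}" by blast
    ultimately show False using assms(4) finite_subset by blast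
  qed
  then show ?thesis
  proof
    assume "infinite ?new"
    then show ?thesis
      using infinite_sibling_family_by_new_components[OF assms(1-3) _
          pairwise_nonisomorphic_subset[OF assms(5)]] T by blast
  next
    assume "infinite ?old"
    then show ?thesis
      using infinite_sibling_family_by_removed_components[OF assms(1-3) _
          pairwise_nonisomorphic_subset[OF assms(5)]] T by blast
  qed
qed

theorem lemma2p2:
  fixes G :: "'a ugraph" and H :: "'a ugraph"
  assumes "graph G" and "countable (verts G)"
    and "H \<in> components G"
    and "\<exists>S :: nat ugraph set. infinite S \<and>
           (\<forall>K\<in>S. graph K \<and> connected_graph K \<and> equimorphic K H) \<and>
           (\<forall>K1\<in>S. \<forall>K2\<in>S. K1 \<noteq> K2 \<longrightarrow> \<not> isomorphic K1 K2)"
  shows "(\<exists>S :: nat ugraph set. infinite S \<and>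
           (\<forall>K\<in>S. graph K \<and> equimorphic K G) \<and>
           (\<forall>K1\<in>S. \<forall>K2\<in>S. K1 \<noteq> K2 \<longrightarrow> \<not> isomorphic K1 K2))
       \<and> ((\<exists>C1\<in>components G. \<exists>C2\<in>components G. C1 \<noteq> C2) \<longrightarrow>
          (\<exists>S :: nat ugraph set. infinite S \<and>
           (\<forall>K\<in>S. graph K \<and> equimorphic K G \<and> \<not> connected_graph K) \<and>
           (\<forall>K1\<in>S. \<forall>K2\<in>S. K1 \<noteq> K2 \<longrightarrow> \<not> isomorphic K1 K2)))"
proof -
  obtain T :: "nat ugraph set" where "infinite T" "pairwise_nonisomorphic T"
    "\<And>t. t \<in> T \<Longrightarrow> graph t \<and> connected_graph t \<and> equimorphic t H"
    using assms(4) unfolding pairwise_nonisomorphic_def by blast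
  moreover obtain C0 where "C0 \<in> component_sets G" and "H = induced_subgraph G C0"
    using assms(3) unfolding components_def by blast
  ultimately obtain S :: "nat ugraph set" where "infinite_sibling_family G S"
    using infinite_sibling_family_of_equimorphic_component[OF assms(1,2)] by blast
  then have "infinite S" "\<forall>K1\<in>S. \<forall>K2\<in>S. K1 \<noteq> K2 \<longrightarrow> \<not> isomorphic K1 K2"
    "\<forall>K\<in>S. graph K \<and> equimorphic K G \<and>
      ((\<exists>C1\<in>components G. \<exists>C2\<in>components G. C1 \<noteq> C2) \<longrightarrow> \<not> connected_graph K)"
    unfolding infinite_sibling_family_def pairwise_nonisomorphic_def by simp_all
  then show ?thesis by (intro conjI impI exI[of _ S]) simp_all
qed

end
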